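(* Let $N\ge 1$, let $\mathbf{A}$ and $\mathbf{B}$ be the adjacency matrices of two undirected, connected graphs on the node set $\{1,\dots,N\}$, and let $\beta_1,\delta_1,\beta_2,\delta_2>0$. Consider the bi-virus system $$\dot{\mathbf{x}}=\beta_1\,\mathrm{diag}(\mathbf{1}-\mathbf{x}-\mathbf{y})\mathbf{A}\mathbf{x}-\delta_1\mathbf{x},\qquad \dot{\mathbf{y}}=\beta_2\,\mathrm{diag}(\mathbf{1}-\mathbf{x}-\mathbf{y})\mathbf{B}\mathbf{y}-\delta_2\mathbf{y}$$ on $D=\{(\mathbf{x},\mathbf{y})\in[0,1]^{2N}:\mathbf{x}+\mathbf{y}\le\mathbf{1}\}$, and let $\mathbf{x}^*,\mathbf{y}^*$ be as defined in the context. Then every trajectory starting from a point of $D\setminus\{(\mathbf{0},\mathbf{0})\}$ converges to the set $$Z=\{(\mathbf{u},\mathbf{w})\in D : (\mathbf{0},\mathbf{y}^* )\le_K(\mathbf{u},\mathbf{w})\le_K(\mathbf{x}^*,\mathbf{0})\}.$$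
   Context: Vector inequalities are entrywise. The southeast ordering: $(\mathbf{x},\mathbf{y})\le_K(\bar{\mathbf{x}},\bar{\mathbf{y}})$ iff $x_i\le\bar x_i$ and $y_i\ge\bar y_i$ for all $i$. With $\tau_1=\beta_1/\delta_1$, $\tau_2=\beta_2/\delta_2$ and $\lambda(\cdot)$ the spectral radius of a nonnegative matrix: $\mathbf{x}^*$ is the globally attractive fixed point of the single-virus SIS system $\dot{\mathbf{x}}=\beta_1\mathrm{diag}(\mathbf{1}-\mathbf{x})\mathbf{A}\mathbf{x}-\delta_1\mathbf{x}$ on $[0,1]^N$, namely $\mathbf{x}^*=\mathbf{0}$ if $\tau_1\lambda(\mathbf{A})\le1$ and otherwise the unique fixed point of that system in $(0,1)^N$; likewise $\mathbf{y}^*$ for $\dot{\mathbf{y}}=\beta_2\mathrm{diag}(\mathbf{1}-\mathbf{y})\mathbf{B}\mathbf{y}-\delta_2\mathbf{y}$ with threshold $\tau_2\lambda(\mathbf{B})\le 1$. Convergence to a set means the distance of the trajectory to the set tends to $0$. *)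

theory Defs
  imports "HOL-Analysis.Analysis"
begin

definition adjacency_matrix :: "real^'n^'n \<Rightarrow> bool" where
  "adjacency_matrix A \<longleftrightarrow>
     (\<forall>i j. A$i$j = 0 \<or> A$i$j = 1) \<and> (\<forall>i j. A$i$j = A$j$i) \<and> (\<forall>i. A$i$i = 0)"

definition graph_connected :: "real^'n^'n \<Rightarrow> bool" where
  "graph_connected A \<longleftrightarrow> (\<forall>i j. (i, j) \<in> {(k, l). A$k$l \<noteq> 0}\<^sup>*)"

definition spectral_radius :: "real^'n^'n \<Rightarrow> real" where
  "spectral_radius A = Max {cmod c | c. \<exists>v :: complex^'n. v \<noteq> 0 \<and>
       (\<chi> i j. complex_of_real (A$i$j)) *v v = (\<chi> i. c * v$i)}"

definition sis_field :: "real \<Rightarrow> real \<Rightarrow> real^'n^'n \<Rightarrow> real^'n \<Rightarrow> real^'n" where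
  "sis_field \<beta> \<delta> A x = (\<chi> i. \<beta> * (1 - x$i) * (A *v x)$i - \<delta> * x$i)"

definition sis_fixed_point :: "real \<Rightarrow> real \<Rightarrow> real^'n^'n \<Rightarrow> real^'n" where
  "sis_fixed_point \<beta> \<delta> A =
     (if (\<beta> / \<delta>) * spectral_radius A \<le> 1 then 0
      else (THE x. (\<forall>i. 0 < x$i \<and> x$i < 1) \<and> sis_field \<beta> \<delta> A x = 0))"

definition bivirus_field ::
  "real \<Rightarrow> real \<Rightarrow> real \<Rightarrow> real \<Rightarrow> real^'n^'n \<Rightarrow> real^'n^'n
     \<Rightarrow> (real^'n) \<times> (real^'n) \<Rightarrow> (real^'n) \<times> (real^'n)" where
  "bivirus_field \<beta>1 \<delta>1 \<beta>2 \<delta>2 A B z =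
     (let x = fst z; y = snd z in
      ((\<chi> i. \<beta>1 * (1 - x$i - y$i) * (A *v x)$i - \<delta>1 * x$i),
       (\<chi> i. \<beta>2 * (1 - x$i - y$i) * (B *v y)$i - \<delta>2 * y$i)))"

definition bivirus_domain :: "((real^'n) \<times> (real^'n)) set" where
  "bivirus_domain = {(x, y). (\<forall>i. 0 \<le> x$i \<and> x$i \<le> 1 \<and> 0 \<le> y$i \<and> y$i \<le> 1)
                               \<and> x + y \<le> 1}"

definition le_K :: "(real^'n) \<times> (real^'n) \<Rightarrow> (real^'n) \<times> (real^'n) \<Rightarrow> bool" where
  "le_K p q \<longleftrightarrow> fst p \<le> fst q \<and> snd p \<ge> snd q"

end

(*
  Only upper bounds are at stake: the domain D is forward invariant (at a coordinate of minimal
  margin x_i, y_i or 1 - x_i - y_i the field points inwards), and Z is D cut down by the box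
  [0, x*] x [0, y*].

  Each virus is a subsolution of its own SIS system, because the susceptible fraction 1 - x - y
  is at most 1 - x. That SIS system has supersolutions w, 0 < w < 1, arbitrarily close above x*:
  x* itself above the threshold and small multiples of the Perron vector below it. Along the
  trajectory the largest ratio x_i / w_i decreases at a uniform rate while it exceeds 1 + eps,
  so eventually x <= (1 + eps) w.

  Identifying x* needs the Perron vector of the symmetric connected graph (a maximiser of the
  Rayleigh quotient, made nonnegative), the fact that its eigenvalue is the spectral radius
  (Collatz-Wielandt), and existence (Brouwer) and uniqueness (maximal ratio) of the positive
  SIS equilibrium above the threshold.
*)
theory Submission
  imports Defs "HOL-Real_Asymp.Real_Asymp"
begin

section \<open>Nonnegative matrices, Perron vector and spectral radius\<close>

lemma finite_obtain_argmin:
  fixes f :: "'a::finite \<Rightarrow> 'b::linorder"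
  obtains k where "\<And>j. f k \<le> f j"
proof -
  have "Min (range f) \<in> range f"
    by (rule Min_in) auto
  then obtain k where k: "Min (range f) = f k"
    by (rule imageE)
  show thesis
    by (intro that[of k]) (simp flip: k)
qed

lemma finite_obtain_argmax:
  fixes f :: "'a::finite \<Rightarrow> 'b::linorder"
  obtains k where "\<And>j. f j \<le> f k"
proof -
  have "Max (range f) \<in> range f"
    by (rule Max_in) auto
  then obtain k where k: "Max (range f) = f k"
    by (rule imageE)
  show thesis
    by (intro that[of k]) (simp flip: k)
qed

lemma nonneg_matrix_vector_mult_mono:
  fixes A :: "real^'n^'m"
  assumes "\<And>i j. 0 \<le> A$i$j" and "x \<le> y"
  shows "A *v x \<le> A *v y"
  using assms unfolding less_eq_vec_def matrix_vector_mult_def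
  by (auto intro!: sum_mono mult_left_mono)

lemma unit_matrix_vector_mult_bounds:
  fixes M :: "real^'n^'n"
  assumes M: "\<And>i j. 0 \<le> M$i$j \<and> M$i$j \<le> 1"
    and v: "\<And>j. m \<le> v$j" "\<And>j. \<bar>v$j\<bar> \<le> R" and "m \<le> 0"
  shows "real CARD('n) * m \<le> (M *v v)$i" "\<bar>(M *v v)$i\<bar> \<le> real CARD('n) * R"
proof -
  have entry_lower: "m \<le> M$i$j * v$j" for j
  proof (cases "0 \<le> v$j")
    case True
    then have "0 \<le> M$i$j * v$j"
      using M[of i j] by simp
    then show ?thesis
      using \<open>m \<le> 0\<close> by linarith
  next
    case False
    then have "v$j \<le> M$i$j * v$j"
      using M[of i j] by (simp add: mult_le_cancel_right1)
    then show ?thesis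
      using v(1)[of j] by linarith
  qed
  have "(\<Sum>j\<in>(UNIV::'n set). m) \<le> (\<Sum>j\<in>UNIV. M$i$j * v$j)"
    by (intro sum_mono entry_lower)
  then show "real CARD('n) * m \<le> (M *v v)$i"
    by (simp add: matrix_vector_mult_def)
  have entry_abs: "\<bar>M$i$j * v$j\<bar> \<le> R" for j
    using M[of i j] v(2)[of j] by (simp add: abs_mult mult_le_one order_trans[OF mult_left_le_one_le])
  have "\<bar>(M *v v)$i\<bar> \<le> (\<Sum>j\<in>UNIV. \<bar>M$i$j * v$j\<bar>)"
    by (simp add: matrix_vector_mult_def sum_abs)
  also have "\<dots> \<le> (\<Sum>j\<in>(UNIV::'n set). R)"
    by (intro sum_mono entry_abs)
  finally show "\<bar>(M *v v)$i\<bar> \<le> real CARD('n) * R"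
    by simp
qed

lemma eigenvectors_independent:
  fixes M :: "'a::field^'n^'n"
  assumes "finite W" and "\<And>v. v \<in> W \<Longrightarrow> v \<noteq> 0 \<and> M *v v = e v *s v" and "inj_on e W"
  shows "vec.independent W"
  using assms
proof (induction W rule: finite_induct)
  case empty
  then show ?case by (simp add: vec.independent_empty)
next
  case (insert a W)
  have indep: "vec.independent W"
    using insert by (auto simp: inj_on_insert)
  have "a \<notin> vec.span W"
  proof
    assume "a \<in> vec.span W"
    then obtain u where a: "a = (\<Sum>v\<in>W. u v *s v)"
      using vec.span_finite[OF insert(1)] by auto
    have "M *v a = (\<Sum>v\<in>W. (u v * e v) *s v)"
      using insert(4) unfolding a by (auto simp: vec.sum vec.scale intro!: sum.cong)
    moreover have "M *v a = (\<Sum>v\<in>W. (u v * e a) *s v)"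
      using insert(4) unfolding a by (simp add: vec.scale_sum_right vector_smult_assoc mult.commute)
    ultimately have combination: "(\<Sum>v\<in>W. (u v * (e v - e a)) *s v) = 0"
      by (simp add: algebra_simps vec.scale_left_diff_distrib sum_subtractf)
    have "\<forall>c. (\<Sum>v\<in>W. c v *s v) = 0 \<longrightarrow> (\<forall>v\<in>W. c v = 0)"
      using indep by (simp add: vec.independent_explicit)
    from this[rule_format, OF combination]
    have "u v * (e v - e a) = 0" if "v \<in> W" for v
      using that by blast
    moreover have "e v \<noteq> e a" if "v \<in> W" for v
      using insert(2,5) that by (auto simp: inj_on_def)
    ultimately have "a = 0"
      unfolding a by simp
    then show False
      using insert(4) by auto
  qed
  then show ?case
    using indep by (simp add: vec.independent_insertI)
qed

lemma eigenvalue_unique: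
  fixes v :: "'a::field^'n"
  assumes "v \<noteq> 0" and "c *s v = d *s v"
  shows "c = d"
proof -
  obtain i where "v$i \<noteq> 0"
    using assms(1) by (metis vec_eq_iff zero_index)
  moreover have "c * v$i = d * v$i"
    using assms(2) by (metis vector_smult_component)
  ultimately show ?thesis
    by simp
qed

lemma finite_eigenvalues:
  fixes M :: "'a::field^'n^'n"
  shows "finite {c. \<exists>v. v \<noteq> 0 \<and> M *v v = c *s v}" (is "finite ?E")
proof -
  have "finite ?E \<and> card ?E \<le> CARD('n)"
  proof (rule finite_if_finite_subsets_card_bdd)
    fix G
    assume G: "G \<subseteq> ?E" "finite G"
    then have "\<exists>w. \<forall>c\<in>G. w c \<noteq> 0 \<and> M *v w c = c *s w c"
      by (intro bchoice) blast
    then obtain w where w: "\<forall>c\<in>G. w c \<noteq> 0 \<and> M *v w c = c *s w c"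
      by blast
    have inj: "inj_on w G"
    proof (rule inj_onI)
      fix c d assume "c \<in> G" "d \<in> G" "w c = w d"
      then have "c *s w c = d *s w c"
        using w by metis
      then show "c = d"
        using w \<open>c \<in> G\<close> eigenvalue_unique by blast
    qed
    have "vec.independent (w ` G)"
    proof (rule eigenvectors_independent[where e = "inv_into G w"])
      show "finite (w ` G)"
        using G by simp
      show "v \<noteq> 0 \<and> M *v v = inv_into G w v *s v" if "v \<in> w ` G" for v
        using that w inj by auto
      show "inj_on (inv_into G w) (w ` G)"
        by (simp add: inj_on_inv_into)
    qed
    then have "card (w ` G) \<le> CARD('n)"
      using vec.independent_card_le_dim[of "w ` G" UNIV] by (simp add: vec.dim_UNIV card_cart_basis)
    then show "card G \<le> CARD('n)"
      using card_image[OF inj] by simp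
  qed
  then show ?thesis ..
qed

lemma linear_coeff_zero_if_quadratic_nonneg:
  fixes a p :: real
  assumes "\<And>s. 0 \<le> s * a + s\<^sup>2 * p"
  shows "a = 0"
proof (rule ccontr)
  assume "a \<noteq> 0"
  define q where "q = \<bar>p\<bar> + 1"
  have q: "q > 0" "\<bar>p\<bar> / q < 1"
    by (simp_all add: q_def)
  define s where "s = - a / q"
  have "s * a + s\<^sup>2 * p \<le> s * a + s\<^sup>2 * \<bar>p\<bar>"
    by (simp add: mult_left_mono)
  also have "\<dots> = a\<^sup>2 * (\<bar>p\<bar> / q - 1) / q"
    using q by (simp add: s_def field_simps power2_eq_square)
  also have "\<dots> < 0"
    using q \<open>a \<noteq> 0\<close> by (intro divide_neg_pos mult_pos_neg) auto
  finally show False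
    using assms[of s] by simp
qed

lemma symmetric_matrix_inner_commute:
  fixes A :: "real^'n^'n"
  assumes "transpose A = A"
  shows "x \<bullet> (A *v y) = y \<bullet> (A *v x)"
  by (metis assms dot_lmul_matrix inner_commute transpose_matrix_vector)

lemma symmetric_rayleigh_max_eigenvector:
  fixes A :: "real^'n^'n"
  assumes sym: "transpose A = A"
    and bound: "\<And>y. y \<bullet> (A *v y) \<le> r * (y \<bullet> y)"
    and attained: "v \<bullet> (A *v v) = r * (v \<bullet> v)"
  shows "A *v v = r *\<^sub>R v"
proof -
  define Q where "Q y = r * (y \<bullet> y) - y \<bullet> (A *v y)" for y
  define d where "d = r *\<^sub>R v - A *v v"
  have expansion: "Q (v + s *\<^sub>R d) = s * (2 * (d \<bullet> d)) + s\<^sup>2 * Q d" for s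
  proof -
    have "v \<bullet> (A *v d) = d \<bullet> (A *v v)"
      by (rule symmetric_matrix_inner_commute[OF sym])
    then show ?thesis
      using attained
      by (simp add: Q_def d_def matrix_vector_right_distrib matrix_vector_mult_scaleR
          inner_add_left inner_add_right inner_diff_left inner_diff_right inner_commute
          power2_eq_square algebra_simps)
  qed
  have Q_nonneg: "0 \<le> Q y" for y
    using bound[of y] by (simp add: Q_def)
  have "2 * (d \<bullet> d) = 0"
  proof (rule linear_coeff_zero_if_quadratic_nonneg[where p = "Q d"])
    show "0 \<le> s * (2 * (d \<bullet> d)) + s\<^sup>2 * Q d" for s
      using Q_nonneg[of "v + s *\<^sub>R d"] by (simp add: expansion)
  qed
  then show ?thesis
    by (simp add: d_def)
qed

lemma nonneg_eigenvector_pos: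
  fixes A :: "real^'n^'n"
  assumes nonneg: "\<And>i j. 0 \<le> A$i$j" and conn: "graph_connected A"
    and v: "0 \<le> v" "v \<noteq> 0" and eig: "A *v v = r *\<^sub>R v"
  shows "0 < v$i"
proof (rule ccontr)
  assume "\<not> 0 < v$i"
  moreover have "0 \<le> v$i"
    using v(1) by (simp add: less_eq_vec_def)
  ultimately have vi: "v$i = 0"
    by simp
  have zero_along_edge: "v$l = 0" if "v$k = 0" "A$k$l \<noteq> 0" for k l
  proof -
    have "(A *v v)$k = 0"
      using eig that(1) by simp
    then have "(\<Sum>m\<in>UNIV. A$k$m * v$m) = 0"
      by (simp add: matrix_vector_mult_def)
    then have "\<forall>m\<in>UNIV. A$k$m * v$m = 0"
      using nonneg v(1) by (subst sum_nonneg_eq_0_iff[symmetric]) (auto simp: less_eq_vec_def)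
    then show ?thesis
      using that(2) by auto
  qed
  have "v$j = 0" for j
  proof -
    have "(i, j) \<in> {(k, l). A$k$l \<noteq> 0}\<^sup>*"
      using conn by (simp add: graph_connected_def)
    then show ?thesis
      by (induction rule: rtrancl_induct) (use vi zero_along_edge in auto)
  qed
  then show False
    using v(2) by (simp add: vec_eq_iff)
qed

lemma quadratic_form_as_sum:
  fixes A :: "real^'n^'n"
  shows "y \<bullet> (A *v y) = (\<Sum>i\<in>UNIV. \<Sum>j\<in>UNIV. y$i * A$i$j * y$j)"
  by (simp add: inner_vec_def matrix_vector_mult_def sum_distrib_left mult.assoc)

lemma quadratic_form_le_sphere_max:
  fixes A :: "real^'n^'n"
  assumes x_max: "\<And>y. y \<in> sphere 0 1 \<Longrightarrow> y \<bullet> (A *v y) \<le> x \<bullet> (A *v x)"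
  shows "y \<bullet> (A *v y) \<le> (x \<bullet> (A *v x)) * (y \<bullet> y)"
proof (cases "y = 0")
  case False
  then have "(y /\<^sub>R norm y) \<bullet> (A *v (y /\<^sub>R norm y)) \<le> x \<bullet> (A *v x)"
    by (intro x_max) simp
  moreover have "(y /\<^sub>R norm y) \<bullet> (A *v (y /\<^sub>R norm y)) = (y \<bullet> (A *v y)) / (norm y)\<^sup>2"
    by (simp add: matrix_vector_mult_scaleR power2_eq_square field_simps)
  ultimately show ?thesis
    using False by (simp add: divide_le_eq power2_norm_eq_inner mult.commute)
qed simp

lemma nonneg_quadratic_form_le_abs:
  fixes A :: "real^'n^'n"
  assumes nonneg: "\<And>i j. 0 \<le> A$i$j"
  shows "x \<bullet> (A *v x) \<le> (\<chi> i. \<bar>x$i\<bar>) \<bullet> (A *v (\<chi> i. \<bar>x$i\<bar>))"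
  unfolding quadratic_form_as_sum
proof (intro sum_mono)
  fix i j
  have "x$i * A$i$j * x$j = A$i$j * (x$i * x$j)"
    by simp
  also have "\<dots> \<le> A$i$j * (\<bar>x$i\<bar> * \<bar>x$j\<bar>)"
    using nonneg by (intro mult_left_mono) (auto simp: abs_mult[symmetric])
  finally show "x$i * A$i$j * x$j \<le> (\<chi> i. \<bar>x$i\<bar>)$i * A$i$j * (\<chi> i. \<bar>x$i\<bar>)$j"
    by (simp add: mult_ac)
qed

lemma perron_symmetric_connected:
  fixes A :: "real^'n^'n"
  assumes nonneg: "\<And>i j. 0 \<le> A$i$j" and sym: "transpose A = A" and conn: "graph_connected A"
  obtains \<rho> v where "0 \<le> \<rho>" "\<And>i. 0 < v$i" "A *v v = \<rho> *\<^sub>R v"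
proof -
  have "sphere (0::real^'n) 1 \<noteq> {}" "continuous_on (sphere 0 1) (\<lambda>y. y \<bullet> (A *v y))"
    by (auto intro!: continuous_intros)
  then obtain x where x: "x \<in> sphere 0 1"
    and x_max: "\<And>y. y \<in> sphere 0 1 \<Longrightarrow> y \<bullet> (A *v y) \<le> x \<bullet> (A *v x)"
    using continuous_attains_sup[OF compact_sphere] by blast
  define r where "r = x \<bullet> (A *v x)"
  define v where "v = (\<chi> i. \<bar>x$i\<bar>)"
  have bound: "y \<bullet> (A *v y) \<le> r * (y \<bullet> y)" for y
    unfolding r_def by (rule quadratic_form_le_sphere_max[OF x_max])
  have "x \<bullet> x = 1"
    using x by (simp add: dot_square_norm)
  then have v_unit: "v \<bullet> v = 1"
    by (simp add: v_def inner_vec_def abs_mult_self_eq)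
  have v_nonneg: "0 \<le> v"
    by (simp add: v_def less_eq_vec_def)
  have attained: "v \<bullet> (A *v v) = r * (v \<bullet> v)"
    using bound[of v] nonneg_quadratic_form_le_abs[OF nonneg, of x] v_unit by (simp add: r_def v_def)
  have eig: "A *v v = r *\<^sub>R v"
    by (rule symmetric_rayleigh_max_eigenvector[OF sym bound attained])
  have "0 \<le> v \<bullet> (A *v v)"
    unfolding quadratic_form_as_sum using nonneg v_nonneg
    by (intro sum_nonneg) (auto simp: less_eq_vec_def)
  then have "0 \<le> r"
    using attained v_unit by simp
  moreover have "v \<noteq> 0"
    using v_unit by auto
  ultimately show ?thesis
    using that nonneg_eigenvector_pos[OF nonneg conn v_nonneg _ eig] eig by blast
qed

lemma complex_eigenvalue_norm_le_pos_eigenvalue: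
  fixes A :: "real^'n^'n" and w :: "complex^'n"
  assumes nonneg: "\<And>i j. 0 \<le> A$i$j"
    and pos: "\<And>i. 0 < v$i" and eig: "A *v v = \<rho> *\<^sub>R v"
    and w: "w \<noteq> 0" "(\<chi> i j. complex_of_real (A$i$j)) *v w = (\<chi> i. c * w$i)"
  shows "cmod c \<le> \<rho>"
proof -
  \<comment> \<open>Collatz--Wielandt: compare \<open>\<bar>w\<bar>\<close> with \<open>v\<close> at a coordinate maximising \<open>\<bar>w$j\<bar> / v$j\<close>\<close>
  obtain k where k: "\<And>j. cmod (w$j) / v$j \<le> cmod (w$k) / v$k"
    using finite_obtain_argmax[of "\<lambda>j. cmod (w$j) / v$j"] by blast
  define m where "m = cmod (w$k) / v$k"
  have w_le: "cmod (w$j) \<le> m * v$j" for j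
    using k[of j] pos[of j] by (simp add: m_def divide_le_eq)
  have "w$k \<noteq> 0"
  proof
    assume "w$k = 0"
    then have "w$j = 0" for j
      using w_le[of j] by (simp add: m_def)
    then show False
      using w(1) by (simp add: vec_eq_iff)
  qed
  have "((\<chi> i j. complex_of_real (A$i$j)) *v w)$k = c * w$k"
    using w(2) by simp
  then have "cmod c * cmod (w$k) = cmod (\<Sum>j\<in>UNIV. complex_of_real (A$k$j) * w$j)"
    by (simp add: matrix_vector_mult_def norm_mult)
  also have "\<dots> \<le> (\<Sum>j\<in>UNIV. cmod (complex_of_real (A$k$j) * w$j))"
    by (rule norm_sum)
  also have "\<dots> = (\<Sum>j\<in>UNIV. A$k$j * cmod (w$j))"
    using nonneg by (simp add: norm_mult)
  also have "\<dots> \<le> (\<Sum>j\<in>UNIV. A$k$j * (m * v$j))"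
    using nonneg w_le by (intro sum_mono mult_left_mono) auto
  also have "\<dots> = m * (A *v v)$k"
    by (simp add: matrix_vector_mult_def sum_distrib_left mult_ac)
  also have "\<dots> = \<rho> * cmod (w$k)"
    using eig pos[of k] by (simp add: m_def)
  finally show ?thesis
    using \<open>w$k \<noteq> 0\<close> by simp
qed

lemma spectral_radius_eq_pos_eigenvalue:
  fixes A :: "real^'n^'n"
  assumes nonneg: "\<And>i j. 0 \<le> A$i$j"
    and pos: "\<And>i. 0 < v$i" and eig: "A *v v = \<rho> *\<^sub>R v" and "0 \<le> \<rho>"
  shows "spectral_radius A = \<rho>"
proof -
  define Ac where "Ac = (\<chi> i j. complex_of_real (A$i$j))"
  define S where "S = {cmod c | c. \<exists>w :: complex^'n. w \<noteq> 0 \<and> Ac *v w = (\<chi> i. c * w$i)}"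
  have "S = cmod ` {c. \<exists>w. w \<noteq> 0 \<and> Ac *v w = c *s w}"
    unfolding S_def vector_scalar_mult_def by auto
  then have "finite S"
    by (simp only: finite_imageI[OF finite_eigenvalues])
  moreover have "\<rho> \<in> S"
  proof -
    define w where "w = (\<chi> i. complex_of_real (v$i))"
    have "w$i \<noteq> 0" for i
      using pos[of i] by (simp add: w_def)
    then have "w \<noteq> 0"
      by (metis zero_index)
    moreover have "(A *v v)$i = \<rho> * v$i" for i
      using eig by simp
    then have "(\<Sum>j\<in>UNIV. A$i$j * v$j) = \<rho> * v$i" for i
      by (simp add: matrix_vector_mult_def)
    then have "Ac *v w = (\<chi> i. complex_of_real \<rho> * w$i)"
      by (simp add: Ac_def w_def matrix_vector_mult_def vec_eq_iff flip: of_real_mult of_real_sum)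
    ultimately show ?thesis
      unfolding S_def using \<open>0 \<le> \<rho>\<close> by force
  qed
  moreover have "s \<le> \<rho>" if "s \<in> S" for s
    using that complex_eigenvalue_norm_le_pos_eigenvalue[OF nonneg pos eig]
    by (auto simp: S_def Ac_def)
  ultimately have "Max S = \<rho>"
    by (intro Max_eqI)
  then show ?thesis
    by (simp add: spectral_radius_def S_def Ac_def)
qed

section \<open>Equilibria and supersolutions of the SIS system\<close>

lemma sis_field_nth: "sis_field \<beta> \<delta> A x $ i = \<beta> * (1 - x$i) * (A *v x)$i - \<delta> * x$i"
  by (simp add: sis_field_def)

lemma sis_equilibrium_le:
  fixes A :: "real^'n^'n"
  assumes nonneg: "\<And>i j. 0 \<le> A$i$j" and "\<beta> > 0" "\<delta> > 0"
    and a: "\<And>i. 0 < a$i \<and> a$i < 1" "sis_field \<beta> \<delta> A a = 0"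
    and b: "\<And>i. 0 < b$i \<and> b$i < 1" "sis_field \<beta> \<delta> A b = 0"
  shows "b \<le> a"
proof -
  \<comment> \<open>at a coordinate maximising \<open>b$j / a$j\<close>, a ratio \<open>g > 1\<close> would force \<open>b$k \<le> a$k\<close>\<close>
  obtain k where k: "\<And>j. b$j / a$j \<le> b$k / a$k"
    using finite_obtain_argmax[of "\<lambda>j. b$j / a$j"] by blast
  define g where "g = b$k / a$k"
  have b_le: "b$j \<le> g * a$j" for j
    using k[of j] a(1)[of j] by (simp add: g_def pos_divide_le_eq)
  have "g \<le> 1"
  proof (rule ccontr)
    assume "\<not> g \<le> 1"
    have eq_a: "\<delta> * a$k = \<beta> * (1 - a$k) * (A *v a)$k" and eq_b: "\<delta> * b$k = \<beta> * (1 - b$k) * (A *v b)$k"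
      using a(2) b(2) by (metis sis_field_nth zero_index eq_iff_diff_eq_0)+
    have "0 < \<delta> * a$k"
      using a(1)[of k] \<open>\<delta> > 0\<close> by simp
    then have "0 < \<beta> * (1 - a$k) * (A *v a)$k"
      by (simp only: eq_a)
    moreover have "0 < \<beta> * (1 - a$k)"
      using a(1)[of k] \<open>\<beta> > 0\<close> by simp
    ultimately have Aa_pos: "0 < (A *v a)$k"
      by (simp add: zero_less_mult_iff)
    have "(A *v b)$k \<le> (A *v (g *\<^sub>R a))$k"
      using nonneg_matrix_vector_mult_mono[OF nonneg, of b "g *\<^sub>R a"] b_le
      by (simp add: less_eq_vec_def)
    then have "\<delta> * b$k \<le> \<beta> * (1 - b$k) * (g * (A *v a)$k)"
      using eq_b b(1)[of k] \<open>\<beta> > 0\<close> by (simp add: matrix_vector_mult_scaleR mult_left_mono)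
    moreover have "\<delta> * b$k = g * (\<delta> * a$k)"
      using a(1)[of k] by (simp add: g_def)
    then have "\<delta> * b$k = \<beta> * (1 - a$k) * (g * (A *v a)$k)"
      by (simp add: eq_a)
    ultimately have "(g * \<beta> * (A *v a)$k) * (1 - a$k) \<le> (g * \<beta> * (A *v a)$k) * (1 - b$k)"
      by (simp add: mult_ac)
    then have "b$k \<le> a$k"
      using \<open>\<not> g \<le> 1\<close> \<open>\<beta> > 0\<close> Aa_pos by (simp add: mult_le_cancel_left_pos)
    moreover have "a$k < b$k"
      using \<open>\<not> g \<le> 1\<close> a(1)[of k] by (simp add: g_def pos_divide_less_eq[symmetric] not_le)
    ultimately show False
      by simp
  qed
  have "b$i \<le> a$i" for i
  proof -
    have "b$i \<le> g * a$i"
      by (rule b_le)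
    also have "\<dots> \<le> a$i"
      using mult_right_mono[OF \<open>g \<le> 1\<close>, of "a$i"] a(1)[of i] by simp
    finally show ?thesis .
  qed
  then show ?thesis
    by (simp add: less_eq_vec_def)
qed

lemma sis_equilibrium_unique:
  fixes A :: "real^'n^'n"
  assumes "\<And>i j. 0 \<le> A$i$j" and "\<beta> > 0" "\<delta> > 0"
    and "\<And>i. 0 < a$i \<and> a$i < 1" "sis_field \<beta> \<delta> A a = 0"
    and "\<And>i. 0 < b$i \<and> b$i < 1" "sis_field \<beta> \<delta> A b = 0"
  shows "a = b"
  using sis_equilibrium_le[of A \<beta> \<delta>] assms by (metis order.antisym)

lemma sis_euler_step_mono:
  fixes A :: "real^'n^'n"
  assumes nonneg: "\<And>i j. 0 \<le> A$i$j" and "0 \<le> \<beta>" "0 \<le> \<delta>" "0 \<le> h"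
    and rows: "\<And>i. (A *v 1)$i \<le> R" and step: "h * (\<beta> * R + \<delta>) \<le> 1"
    and x: "0 \<le> x" "x \<le> y" "y \<le> 1"
  shows "x + h *\<^sub>R sis_field \<beta> \<delta> A x \<le> y + h *\<^sub>R sis_field \<beta> \<delta> A y"
  unfolding less_eq_vec_def
proof
  fix i
  define P Q where "P = (A *v x)$i" and "Q = (A *v y)$i"
  have "A *v 0 \<le> A *v x" "A *v x \<le> A *v y" "A *v y \<le> A *v 1"
    using x by (intro nonneg_matrix_vector_mult_mono nonneg; simp)+
  then have PQ: "0 \<le> P" "P \<le> Q" "Q \<le> (A *v 1)$i"
    by (simp_all add: P_def Q_def less_eq_vec_def)
  have xy: "0 \<le> x$i" "x$i \<le> y$i" "y$i \<le> 1"
    using x by (auto simp: less_eq_vec_def)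
  have "h * \<beta> * P \<le> h * \<beta> * R"
    using PQ rows[of i] \<open>0 \<le> \<beta>\<close> \<open>0 \<le> h\<close> by (simp add: mult_left_mono)
  then have "0 \<le> (y$i - x$i) * (1 - h * \<beta> * P - h * \<delta>)"
    using xy step by (intro mult_nonneg_nonneg) (auto simp: algebra_simps)
  moreover have "0 \<le> h * \<beta> * (1 - y$i) * (Q - P)"
    using PQ xy \<open>0 \<le> \<beta>\<close> \<open>0 \<le> h\<close> by simp
  moreover have "(y + h *\<^sub>R sis_field \<beta> \<delta> A y)$i - (x + h *\<^sub>R sis_field \<beta> \<delta> A x)$i
      = (y$i - x$i) * (1 - h * \<beta> * P - h * \<delta>) + h * \<beta> * (1 - y$i) * (Q - P)"
    by (simp add: sis_field_nth P_def Q_def algebra_simps)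
  ultimately show "(x + h *\<^sub>R sis_field \<beta> \<delta> A x)$i \<le> (y + h *\<^sub>R sis_field \<beta> \<delta> A y)$i"
    by linarith
qed

lemma monotone_box_map_fixed_point:
  fixes T :: "real^'n \<Rightarrow> real^'n"
  assumes "lo \<le> hi" and "continuous_on {lo..hi} T"
    and mono: "\<And>x y. lo \<le> x \<Longrightarrow> x \<le> y \<Longrightarrow> y \<le> hi \<Longrightarrow> T x \<le> T y"
    and "lo \<le> T lo" "T hi \<le> hi"
  obtains x where "x \<in> {lo..hi}" "T x = x"
proof (rule brouwer)
  show "compact {lo..hi}" "convex {lo..hi}"
    by (simp_all add: interval_cbox_cart)
  show "{lo..hi} \<noteq> {}"
    using \<open>lo \<le> hi\<close> by auto
  show "T \<in> {lo..hi} \<rightarrow> {lo..hi}"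
  proof
    fix y
    assume "y \<in> {lo..hi}"
    then have "lo \<le> y" "y \<le> hi"
      by auto
    then have "lo \<le> T y" "T y \<le> hi"
      using mono[of lo y] mono[of y hi] \<open>lo \<le> T lo\<close> \<open>T hi \<le> hi\<close> by (auto intro: order_trans)
    then show "T y \<in> {lo..hi}"
      by simp
  qed
qed (use assms in auto)

lemma pos_vector_obtain_scale_below:
  fixes v :: "real^'n"
  assumes pos: "\<And>i. 0 < v$i" and "0 < m"
  obtains c where "0 < c" "\<And>i. c * v$i \<le> m"
proof
  define V where "V = (\<Sum>j\<in>UNIV. v$j)"
  have "v$i \<le> V" for i
    using pos unfolding V_def by (intro member_le_sum) (auto intro: less_imp_le)
  moreover have "0 < V"
    using pos[of undefined] \<open>v$undefined \<le> V\<close> by linarith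
  ultimately show "m / V * v$i \<le> m" for i
    using \<open>0 < m\<close> by (simp add: field_simps mult_left_mono)
  show "0 < m / V"
    using \<open>0 < m\<close> \<open>0 < V\<close> by simp
qed

lemma sis_field_eigenvector_nth:
  assumes "A *v v = \<rho> *\<^sub>R v"
  shows "sis_field \<beta> \<delta> A v $ i = v$i * (\<beta> * \<rho> * (1 - v$i) - \<delta>)"
  using assms by (simp add: sis_field_nth algebra_simps)

lemma sis_perron_subsolution:
  fixes A :: "real^'n^'n"
  assumes "\<beta> > 0" "\<delta> > 0"
    and pos: "\<And>i. 0 < v$i" and eig: "A *v v = \<rho> *\<^sub>R v" and above: "\<delta> < \<beta> * \<rho>"
  obtains lo where "\<And>i. 0 < lo$i \<and> lo$i \<le> 1" "0 \<le> sis_field \<beta> \<delta> A lo"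
proof -
  have "0 < \<beta> * \<rho>"
    using above \<open>\<delta> > 0\<close> by linarith
  define \<theta> where "\<theta> = 1 - \<delta> / (\<beta> * \<rho>)"
  have \<theta>: "0 < \<theta>" "\<theta> \<le> 1" "\<beta> * \<rho> * (1 - \<theta>) = \<delta>"
    using above \<open>0 < \<beta> * \<rho>\<close> \<open>\<delta> > 0\<close> by (auto simp: \<theta>_def)
  obtain c where c: "0 < c" "\<And>i. c * v$i \<le> \<theta>"
    using pos_vector_obtain_scale_below[OF pos \<open>0 < \<theta>\<close>] by blast
  have "0 \<le> sis_field \<beta> \<delta> A (c *\<^sub>R v) $ i" for i
  proof -
    have "\<delta> \<le> \<beta> * \<rho> * (1 - c * v$i)"
      using c(2)[of i] \<open>0 < \<beta> * \<rho>\<close> \<theta>(3) by (metis diff_left_mono mult_left_mono less_imp_le)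
    moreover have eig_c: "A *v (c *\<^sub>R v) = \<rho> *\<^sub>R (c *\<^sub>R v)"
      using eig by (simp add: matrix_vector_mult_scaleR)
    ultimately show ?thesis
      using sis_field_eigenvector_nth[OF eig_c, of \<beta> \<delta> i] c(1) pos[of i] by (simp add: mult_nonneg_nonpos)
  qed
  then show ?thesis
    using c \<theta>(2) pos by (intro that[of "c *\<^sub>R v"]) (auto simp: less_eq_vec_def intro: order_trans)
qed

lemma sis_equilibrium_exists:
  fixes A :: "real^'n^'n"
  assumes nonneg: "\<And>i j. 0 \<le> A$i$j" and "\<beta> > 0" "\<delta> > 0"
    and pos: "\<And>i. 0 < v$i" and eig: "A *v v = \<rho> *\<^sub>R v" and above: "\<delta> < \<beta> * \<rho>"
  obtains x where "\<And>i. 0 < x$i \<and> x$i < 1" "sis_field \<beta> \<delta> A x = 0"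
proof -
  \<comment> \<open>an equilibrium is a fixed point of a monotone Euler step, which maps the box between a
    Perron subsolution and \<open>1\<close> into itself\<close>
  obtain lo where lo: "\<And>i. 0 < lo$i \<and> lo$i \<le> 1" "0 \<le> sis_field \<beta> \<delta> A lo"
    using sis_perron_subsolution[OF \<open>\<beta> > 0\<close> \<open>\<delta> > 0\<close> pos eig above] by blast
  define R where "R = (\<Sum>i\<in>UNIV. (A *v 1)$i)"
  have row_nonneg: "0 \<le> (A *v 1)$i" for i
    using nonneg_matrix_vector_mult_mono[OF nonneg, of 0 1] by (simp add: less_eq_vec_def)
  then have rows: "(A *v 1)$i \<le> R" for i
    unfolding R_def by (intro member_le_sum) auto
  then have "0 \<le> R"
    using row_nonneg[of undefined] by (meson order_trans)
  then have "0 < \<beta> * R + \<delta>"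
    using \<open>\<beta> > 0\<close> \<open>\<delta> > 0\<close> by (simp add: add_nonneg_pos)
  define h where "h = 1 / (\<beta> * R + \<delta>)"
  have h: "0 < h" "h * (\<beta> * R + \<delta>) = 1"
    using \<open>0 < \<beta> * R + \<delta>\<close> by (simp_all add: h_def)
  define T where "T x = x + h *\<^sub>R sis_field \<beta> \<delta> A x" for x
  have lo_nonneg: "0 \<le> lo" and "lo \<le> 1"
    using lo(1) by (auto simp: less_eq_vec_def less_imp_le)
  obtain x where x: "x \<in> {lo..1}" "T x = x"
  proof (rule monotone_box_map_fixed_point[OF \<open>lo \<le> 1\<close>])
    show "continuous_on {lo..1} T"
      unfolding T_def sis_field_def by (intro continuous_intros)
    show "T x \<le> T y" if "lo \<le> x" "x \<le> y" "y \<le> 1" for x y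
      unfolding T_def using \<open>\<beta> > 0\<close> \<open>\<delta> > 0\<close> h order_trans[OF lo_nonneg that(1)] that(2,3)
      by (intro sis_euler_step_mono[OF nonneg _ _ _ rows]) auto
    show "lo \<le> T lo"
      using lo(2) h(1) by (simp add: T_def less_eq_vec_def)
    show "T 1 \<le> 1"
      using h(1) \<open>\<delta> > 0\<close> by (simp add: less_eq_vec_def T_def sis_field_nth)
  qed
  have equilibrium: "sis_field \<beta> \<delta> A x = 0"
    using x(2) h(1) by (simp add: T_def)
  have "0 < x$i \<and> x$i < 1" for i
  proof
    show "0 < x$i"
      using x(1) lo(1)[of i] by (auto simp: less_eq_vec_def intro: less_le_trans)
    have "\<beta> * (1 - x$i) * (A *v x)$i - \<delta> * x$i = 0"
      using arg_cong[OF equilibrium, of "\<lambda>v. v$i"] by (simp add: sis_field_nth)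
    then have "x$i \<noteq> 1"
      using \<open>\<delta> > 0\<close> by auto
    moreover have "x$i \<le> 1"
      using x(1) by (simp add: less_eq_vec_def)
    ultimately show "x$i < 1"
      by simp
  qed
  then show ?thesis
    using that equilibrium by blast
qed

lemma adjacency_matrix_entry_bounds:
  assumes "adjacency_matrix A"
  shows "0 \<le> A$i$j" "A$i$j \<le> 1"
  using assms unfolding adjacency_matrix_def by (metis order_refl zero_le_one)+

lemma adjacency_matrix_symmetric:
  assumes "adjacency_matrix A"
  shows "transpose A = A"
  using assms by (simp add: adjacency_matrix_def transpose_def vec_eq_iff)

lemma sis_fixed_point_cases:
  fixes A :: "real^'n^'n"
  assumes adj: "adjacency_matrix A" and conn: "graph_connected A" and "\<beta> > 0" "\<delta> > 0"
  obtains (below) \<rho> v where "\<And>i. 0 < v$i" "A *v v = \<rho> *\<^sub>R v" "0 \<le> \<rho>" "\<beta> * \<rho> \<le> \<delta>"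
      "sis_fixed_point \<beta> \<delta> A = 0"
    | (above) "\<And>i. 0 < sis_fixed_point \<beta> \<delta> A $ i \<and> sis_fixed_point \<beta> \<delta> A $ i < 1"
      "sis_field \<beta> \<delta> A (sis_fixed_point \<beta> \<delta> A) = 0"
proof -
  note nonneg = adjacency_matrix_entry_bounds(1)[OF adj]
  obtain \<rho> v where v: "0 \<le> \<rho>" "\<And>i. 0 < v$i" "A *v v = \<rho> *\<^sub>R v"
    using perron_symmetric_connected[OF nonneg adjacency_matrix_symmetric[OF adj] conn] by blast
  have "spectral_radius A = \<rho>"
    by (rule spectral_radius_eq_pos_eigenvalue[OF nonneg v(2,3,1)])
  then have threshold: "\<beta> / \<delta> * spectral_radius A \<le> 1 \<longleftrightarrow> \<beta> * \<rho> \<le> \<delta>"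
    using \<open>\<delta> > 0\<close> by (simp add: pos_divide_le_eq)
  show ?thesis
  proof (cases "\<beta> * \<rho> \<le> \<delta>")
    case True
    then have "sis_fixed_point \<beta> \<delta> A = 0"
      using threshold by (simp add: sis_fixed_point_def)
    then show ?thesis
      by (rule below[OF v(2,3,1) True])
  next
    case False
    then have "\<delta> < \<beta> * \<rho>"
      by simp
    then obtain w where w: "\<And>i. 0 < w$i \<and> w$i < 1" "sis_field \<beta> \<delta> A w = 0"
      using sis_equilibrium_exists[OF nonneg \<open>\<beta> > 0\<close> \<open>\<delta> > 0\<close> v(2,3)] by metis
    have "(THE x. (\<forall>i. 0 < x$i \<and> x$i < 1) \<and> sis_field \<beta> \<delta> A x = 0) = w"
    proof (rule the_equality)
      show "(\<forall>i. 0 < w$i \<and> w$i < 1) \<and> sis_field \<beta> \<delta> A w = 0"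
        using w by blast
      show "x = w" if "(\<forall>i. 0 < x$i \<and> x$i < 1) \<and> sis_field \<beta> \<delta> A x = 0" for x
        using that w by (auto intro: sis_equilibrium_unique[OF nonneg \<open>\<beta> > 0\<close> \<open>\<delta> > 0\<close>])
    qed
    then have "sis_fixed_point \<beta> \<delta> A = w"
      using False threshold by (simp add: sis_fixed_point_def)
    then show ?thesis
      using w by (intro above) auto
  qed
qed

lemma sis_fixed_point_nonneg:
  fixes A :: "real^'n^'n"
  assumes "adjacency_matrix A" "graph_connected A" "\<beta> > 0" "\<delta> > 0"
  shows "0 \<le> sis_fixed_point \<beta> \<delta> A"
  by (rule sis_fixed_point_cases[OF assms]) (auto simp: less_eq_vec_def less_imp_le)

lemma sis_supersolution_near_fixed_point:
  fixes A :: "real^'n^'n"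
  assumes adj: "adjacency_matrix A" and conn: "graph_connected A" and "\<beta> > 0" "\<delta> > 0" "\<epsilon> > 0"
  obtains w where "\<And>i. 0 < w$i \<and> w$i < 1" "sis_field \<beta> \<delta> A w \<le> 0"
    "\<And>i. w$i \<le> sis_fixed_point \<beta> \<delta> A $ i + \<epsilon>"
proof (rule sis_fixed_point_cases[OF adj conn \<open>\<beta> > 0\<close> \<open>\<delta> > 0\<close>])
  fix \<rho> v
  assume below: "\<And>i. 0 < v$i" "A *v v = \<rho> *\<^sub>R v" "0 \<le> \<rho>" "\<beta> * \<rho> \<le> \<delta>"
    "sis_fixed_point \<beta> \<delta> A = 0"
  \<comment> \<open>below the threshold every small multiple of the Perron vector is a supersolution\<close>
  obtain c where c: "0 < c" "\<And>i. c * v$i \<le> min \<epsilon> (1/2)"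
    using pos_vector_obtain_scale_below[OF below(1), of "min \<epsilon> (1/2)"] \<open>\<epsilon> > 0\<close> by auto
  have field: "sis_field \<beta> \<delta> A (c *\<^sub>R v) $ i \<le> 0" for i
  proof -
    have "\<beta> * \<rho> * (1 - c * v$i) \<le> \<beta> * \<rho>"
      using below(1,3) c \<open>\<beta> > 0\<close> by (intro mult_left_le) (auto simp: less_imp_le)
    moreover have eig_c: "A *v (c *\<^sub>R v) = \<rho> *\<^sub>R (c *\<^sub>R v)"
      using below(2) by (simp add: matrix_vector_mult_scaleR)
    moreover have "0 \<le> c * v$i"
      using c(1) below(1)[of i] by simp
    ultimately show ?thesis
      using sis_field_eigenvector_nth[OF eig_c, of \<beta> \<delta> i] below(4)
      by (simp add: mult_nonneg_nonpos)
  qed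
  show ?thesis
  proof (rule that)
    show "0 < (c *\<^sub>R v)$i \<and> (c *\<^sub>R v)$i < 1" for i
      using c(1) c(2)[of i] below(1)[of i] by simp
    show "sis_field \<beta> \<delta> A (c *\<^sub>R v) \<le> 0"
      using field by (simp add: less_eq_vec_def)
    show "(c *\<^sub>R v)$i \<le> sis_fixed_point \<beta> \<delta> A $ i + \<epsilon>" for i
      using c(2)[of i] below(5) by simp
  qed
next
  assume "\<And>i. 0 < sis_fixed_point \<beta> \<delta> A $ i \<and> sis_fixed_point \<beta> \<delta> A $ i < 1"
    "sis_field \<beta> \<delta> A (sis_fixed_point \<beta> \<delta> A) = 0"
  then show ?thesis
    using \<open>\<epsilon> > 0\<close> by (intro that) (auto simp: less_eq_vec_def)
qed

section \<open>Barrier arguments for differential inequalities\<close>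

lemma first_zero_of_positive_family:
  fixes g :: "'j::finite \<Rightarrow> real \<Rightarrow> real"
  assumes cont: "\<And>j. continuous_on {0..T} (g j)" and init: "\<And>j. 0 < g j 0"
    and hit: "0 \<le> t" "t \<le> T" "g j t \<le> 0"
  obtains t0 k where "0 < t0" "t0 \<le> T" "g k t0 = 0" "\<And>j. 0 \<le> g j t0"
    "\<And>j s. 0 \<le> s \<Longrightarrow> s < t0 \<Longrightarrow> 0 < g j s"
proof -
  define S where "S = (\<Union>j. {0..T} \<inter> g j -` {..0})"
  have "closed S"
    unfolding S_def using cont by (intro closed_Union) (auto intro: continuous_closed_preimage)
  moreover have "t \<in> {0..T} \<inter> g j -` {..0}"
    using hit by simp
  then have "t \<in> S"
    unfolding S_def by blast
  moreover have "bdd_below S"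
    by (auto simp: S_def intro: bdd_belowI[of _ 0])
  ultimately have t0: "Inf S \<in> S" and t0_le: "\<And>s. s \<in> S \<Longrightarrow> Inf S \<le> s"
    by (auto intro: closed_contains_Inf cInf_lower)
  define t0 where "t0 = Inf S"
  obtain k where k: "0 \<le> t0" "t0 \<le> T" "g k t0 \<le> 0"
    using t0 by (auto simp: S_def t0_def)
  have before: "0 < g j s" if "0 \<le> s" "s < t0" for j s
  proof (rule ccontr)
    assume "\<not> 0 < g j s"
    then have "s \<in> {0..T} \<inter> g j -` {..0}"
      using that k(2) by auto
    then have "s \<in> S"
      unfolding S_def by blast
    then show False
      using that(2) t0_le[of s] by (simp add: t0_def)
  qed
  have "0 < t0"
    using k init[of k] by (cases "t0 = 0") auto
  have reached: "0 \<le> g j t0" for j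
  proof (rule ccontr)
    assume "\<not> 0 \<le> g j t0"
    moreover have "continuous_on {0..t0} (g j)"
      using cont by (rule continuous_on_subset) (use k in auto)
    ultimately obtain s where "0 \<le> s" "s \<le> t0" "g j s = 0"
      using IVT2'[of "g j" t0 0 0] k(1) init[of j] by auto
    then show False
      using before[of s j] \<open>\<not> 0 \<le> g j t0\<close> by (cases "s = t0") auto
  qed
  have "g k t0 = 0"
    using reached[of k] k(3) by simp
  show ?thesis
    by (rule that[OF \<open>0 < t0\<close> k(2) \<open>g k t0 = 0\<close> reached before])
qed

lemma below_barrier:
  fixes u :: "'j::finite \<Rightarrow> real \<Rightarrow> real" and b :: "real \<Rightarrow> real"
  assumes u: "\<And>j t. 0 \<le> t \<Longrightarrow> (u j has_real_derivative u' j t) (at t within {0..})"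
    and b: "\<And>t. 0 \<le> t \<Longrightarrow> (b has_real_derivative b' t) (at t within {0..})"
    and init: "\<And>j. u j 0 < b 0"
    and touch: "\<And>k t. 0 < t \<Longrightarrow> t \<le> T \<Longrightarrow> u k t = b t \<Longrightarrow> (\<And>j. u j t \<le> b t) \<Longrightarrow> u' k t < b' t"
    and t: "0 \<le> t" "t \<le> T"
  shows "u j t < b t"
proof (rule ccontr)
  assume "\<not> u j t < b t"
  define g where "g j s = b s - u j s" for j s
  have g_deriv: "(g j has_real_derivative b' s - u' j s) (at s within {0..})" if "0 \<le> s" for j s
    unfolding g_def using b[OF that] u[OF that] by (rule DERIV_diff)
  have "continuous_on {0..T} (g j)" for j
    using DERIV_continuous_on[of "{0..}" "g j", OF g_deriv] continuous_on_subset by fastforce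
  then obtain t0 k where t0: "0 < t0" "t0 \<le> T" "g k t0 = 0" "\<And>j. 0 \<le> g j t0"
    and before: "\<And>j s. 0 \<le> s \<Longrightarrow> s < t0 \<Longrightarrow> 0 < g j s"
    using first_zero_of_positive_family[of T g t j] init t \<open>\<not> u j t < b t\<close> by (auto simp: g_def)
  have "u' k t0 < b' t0"
    using t0 by (intro touch) (auto simp: g_def)
  then obtain d where d: "d > 0" "\<And>h. 0 < h \<Longrightarrow> t0 - h \<in> {0..} \<Longrightarrow> h < d \<Longrightarrow> g k (t0 - h) < g k t0"
    using has_real_derivative_pos_inc_left[OF g_deriv[of t0 k]] t0(1) by auto
  define h where "h = min d t0 / 2"
  have "0 < h" "h < d" "h \<le> t0"
    using d(1) t0(1) by (auto simp: h_def)
  then have "g k (t0 - h) < g k t0"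
    by (intro d(2)) auto
  moreover have "0 < g k (t0 - h)"
    using \<open>0 < h\<close> \<open>h \<le> t0\<close> by (intro before) auto
  ultimately show False
    using t0(3) by simp
qed

lemma eventually_below_of_decreasing_maximum:
  fixes u :: "'j::finite \<Rightarrow> real \<Rightarrow> real"
  assumes u: "\<And>j t. 0 \<le> t \<Longrightarrow> (u j has_real_derivative u' j t) (at t within {0..})"
    and "\<eta> > 0"
    and decrease: "\<And>k t. 0 \<le> t \<Longrightarrow> L \<le> u k t \<Longrightarrow> (\<And>j. u j t \<le> u k t) \<Longrightarrow> u' k t \<le> - \<eta>"
    and "e > 0"
  shows "\<forall>\<^sub>F t in at_top. u j t < L + e"
proof -
  define C where "C = 1 + (\<Sum>j\<in>UNIV. \<bar>u j 0 - L\<bar>)"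
  have "0 < C"
    by (simp add: C_def add_pos_nonneg sum_nonneg)
  have init: "u j 0 < L + C" for j
  proof -
    have "\<bar>u j 0 - L\<bar> \<le> (\<Sum>j\<in>UNIV. \<bar>u j 0 - L\<bar>)"
      by (rule member_le_sum) auto
    then show ?thesis
      by (simp add: C_def)
  qed
  define g where "g = \<eta> / (2 * C)"
  have "0 < g"
    using \<open>\<eta> > 0\<close> \<open>0 < C\<close> by (simp add: g_def)
  define b where "b t = L + C * exp (- g * t)" for t
  have b_deriv: "(b has_real_derivative - g * C * exp (- g * t)) (at t within {0..})" for t
    unfolding b_def by (auto intro!: derivative_eq_intros)
  have below: "u j t < b t" if "0 \<le> t" for t
  proof (rule below_barrier[OF u b_deriv _ _ that order_refl])
    show "u j 0 < b 0" for j
      using init by (simp add: b_def)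
    fix k s
    assume s: "0 < s" "u k s = b s" "\<And>j. u j s \<le> b s"
    have "L \<le> u k s"
      using s(2) \<open>0 < C\<close> by (simp add: b_def)
    then have "u' k s \<le> - \<eta>"
      using s by (intro decrease) auto
    moreover have "g * C * exp (- g * s) \<le> g * C"
      using \<open>0 < g\<close> \<open>0 < C\<close> s(1) by simp
    moreover have "g * C = \<eta> / 2"
      using \<open>0 < C\<close> by (simp add: g_def)
    moreover have "- g * C * exp (- g * s) = - (g * C * exp (- g * s))"
      by simp
    ultimately show "u' k s < - g * C * exp (- g * s)"
      using \<open>\<eta> > 0\<close> by linarith
  qed
  have "((\<lambda>t. C * exp (- g * t)) \<longlongrightarrow> 0) at_top"
    using \<open>0 < g\<close> by real_asymp
  then have "\<forall>\<^sub>F t in at_top. C * exp (- g * t) < e"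
    using \<open>e > 0\<close> by (rule order_tendstoD)
  then show ?thesis
    using eventually_ge_at_top[of 0] by eventually_elim (use below in \<open>fastforce simp: b_def\<close>)
qed

lemma nonneg_of_inward_minimum:
  fixes q :: "'j::finite \<Rightarrow> real \<Rightarrow> real"
  assumes q: "\<And>j t. 0 \<le> t \<Longrightarrow> (q j has_real_derivative q' j t) (at t within {0..})"
    and init: "\<And>j. 0 \<le> q j 0" and "\<epsilon> > 0"
    and inward: "\<And>k t. 0 \<le> t \<Longrightarrow> - \<epsilon> \<le> q k t \<Longrightarrow> q k t \<le> 0 \<Longrightarrow> (\<And>j. q k t \<le> q j t)
                  \<Longrightarrow> K * q k t \<le> q' k t"
    and "0 \<le> t"
  shows "0 \<le> q j t"
proof (rule ccontr)
  assume "\<not> 0 \<le> q j t"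
  \<comment> \<open>a growing barrier \<open>b\<close> for \<open>- q\<close>, small enough that \<open>inward\<close> applies whenever it is
    touched before time \<open>t\<close>, and that \<open>- q j t\<close> already exceeds it at time \<open>t\<close>\<close>
  define c where "c = \<bar>K\<bar> + 1"
  define \<eta> where "\<eta> = min \<epsilon> (- q j t) / exp (c * t)"
  have "0 < \<eta>"
    using \<open>\<epsilon> > 0\<close> \<open>\<not> 0 \<le> q j t\<close> by (simp add: \<eta>_def)
  define b where "b s = \<eta> * exp (c * s)" for s
  have b_deriv: "(b has_real_derivative \<eta> * exp (c * s) * c) (at s within {0..})" for s
    unfolding b_def by (auto intro!: derivative_eq_intros)
  have b_le: "b s \<le> min \<epsilon> (- q j t)" if "s \<le> t" for s
  proof -
    have "exp (c * s) \<le> exp (c * t)"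
      using that by (simp add: c_def mult_left_mono)
    then have "b s \<le> \<eta> * exp (c * t)"
      using \<open>0 < \<eta>\<close> by (simp add: b_def)
    then show ?thesis
      by (simp add: \<eta>_def)
  qed
  have "- q j t < b t"
  proof (rule below_barrier[where u = "\<lambda>j s. - q j s", OF DERIV_minus[OF q] b_deriv _ _ \<open>0 \<le> t\<close> order_refl])
    show "- q j 0 < b 0" for j
      using init[of j] \<open>0 < \<eta>\<close> by (simp add: b_def)
    fix k s
    assume s: "0 < s" "s \<le> t" "- q k s = b s" "\<And>j. - q j s \<le> b s"
    have "0 < b s"
      using \<open>0 < \<eta>\<close> by (simp add: b_def)
    have "q k s \<le> q i s" for i
      using s(3) s(4)[of i] by linarith
    then have "K * q k s \<le> q' k s"
      using s b_le[of s] \<open>0 < b s\<close> by (intro inward) auto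
    moreover have "K * b s \<le> \<bar>K\<bar> * b s"
      using \<open>0 < b s\<close> by (intro mult_right_mono) auto
    moreover have "K * q k s = - (K * b s)"
      using s(3) by (metis minus_minus mult_minus_right)
    ultimately show "- q' k s < \<eta> * exp (c * s) * c"
      using \<open>0 < b s\<close> by (simp add: b_def c_def algebra_simps)
  qed
  then show False
    using b_le[of t] by simp
qed

section \<open>Comparison of an infection with SIS supersolutions\<close>

lemma sis_rate_le_at_max_ratio:
  fixes \<beta> \<delta> \<sigma> x w P W g \<epsilon> :: real
  assumes "0 \<le> \<beta>" "0 \<le> \<delta>" "0 \<le> \<sigma>" "\<sigma> \<le> 1 - x" "0 \<le> P" "P \<le> g * W"
    and "x = g * w" "0 < w" "w < 1" and super: "\<beta> * (1 - w) * W \<le> \<delta> * w"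
    and "1 + \<epsilon> \<le> g" "0 \<le> \<epsilon>"
  shows "\<beta> * \<sigma> * P - \<delta> * x \<le> - (\<delta> * \<epsilon> * w\<^sup>2)"
proof -
  have "0 < g"
    using assms by linarith
  have "\<beta> * \<sigma> * P \<le> \<beta> * (1 - x) * P"
    using assms by (intro mult_right_mono mult_left_mono) auto
  also have "\<dots> \<le> \<beta> * (1 - x) * (g * W)"
    using assms by (intro mult_left_mono) auto
  finally have rate: "\<beta> * \<sigma> * P - \<delta> * x \<le> g * (\<beta> * (1 - x) * W - \<delta> * w)"
    using \<open>x = g * w\<close> by (simp add: algebra_simps)
  define Y where "Y = \<beta> * (1 - x) * W - \<delta> * w"
  \<comment> \<open>the supersolution inequality enters after multiplying by \<open>1 - w\<close>\<close>
  have "(1 - w) * Y = (1 - x) * (\<beta> * (1 - w) * W) - \<delta> * w * (1 - w)"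
    by (simp add: Y_def algebra_simps)
  also have "\<dots> \<le> (1 - x) * (\<delta> * w) - \<delta> * w * (1 - w)"
    using assms by (intro diff_right_mono mult_left_mono) auto
  also have "\<dots> = - (\<delta> * w * (x - w))"
    by (simp add: algebra_simps)
  also have "\<dots> \<le> - (\<delta> * w * (\<epsilon> * w))"
    using mult_right_mono[OF \<open>1 + \<epsilon> \<le> g\<close>, of w] assms
    by (intro le_imp_neg_le mult_left_mono) (auto simp: algebra_simps)
  also have "\<dots> = - (\<delta> * \<epsilon> * w\<^sup>2)"
    by (simp add: power2_eq_square mult_ac)
  finally have Y_bound: "(1 - w) * Y \<le> - (\<delta> * \<epsilon> * w\<^sup>2)" .
  have "0 \<le> \<delta> * \<epsilon> * w\<^sup>2"
    using assms by simp
  have "Y \<le> 0"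
  proof (rule ccontr)
    assume "\<not> Y \<le> 0"
    then have "0 < (1 - w) * Y"
      using \<open>w < 1\<close> by simp
    then show False
      using Y_bound \<open>0 \<le> \<delta> * \<epsilon> * w\<^sup>2\<close> by linarith
  qed
  then have "Y \<le> (1 - w) * Y"
    using mult_nonpos_nonneg[of Y w] \<open>0 < w\<close> by (simp add: algebra_simps)
  then have "Y \<le> - (\<delta> * \<epsilon> * w\<^sup>2)"
    using Y_bound by linarith
  moreover have "g * Y \<le> 1 * Y"
    using \<open>Y \<le> 0\<close> \<open>1 + \<epsilon> \<le> g\<close> \<open>0 \<le> \<epsilon>\<close> by (intro mult_right_mono_neg) auto
  ultimately show ?thesis
    using rate by (simp add: Y_def)
qed

lemma sis_eventually_below_supersolution:
  fixes A :: "real^'n^'n" and x \<sigma> :: "real \<Rightarrow> real^'n"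
  assumes nonneg: "\<And>i j. 0 \<le> A$i$j" and "0 < \<beta>" "0 < \<delta>"
    and w: "\<And>i. 0 < w$i \<and> w$i < 1" and super: "sis_field \<beta> \<delta> A w \<le> 0"
    and bounds: "\<And>t. 0 \<le> t \<Longrightarrow> 0 \<le> x t \<and> 0 \<le> \<sigma> t \<and> \<sigma> t \<le> 1 - x t"
    and x: "\<And>i t. 0 \<le> t \<Longrightarrow> ((\<lambda>t. x t $ i) has_real_derivative
              \<beta> * \<sigma> t $ i * (A *v x t)$i - \<delta> * x t $ i) (at t within {0..})"
    and "0 < \<epsilon>"
  shows "\<forall>\<^sub>F t in at_top. x t $ i < (1 + \<epsilon>) * w$i"
proof -
  obtain m where m: "\<And>j. w$m \<le> w$j"
    using finite_obtain_argmin[of "\<lambda>j. w$j"] by blast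
  define \<eta> where "\<eta> = \<delta> * (\<epsilon> / 2) * w$m"
  have "0 < \<eta>"
    using \<open>0 < \<delta>\<close> \<open>0 < \<epsilon>\<close> w[of m] by (simp add: \<eta>_def)
  have "\<forall>\<^sub>F t in at_top. x t $ i / w$i < (1 + \<epsilon> / 2) + \<epsilon> / 2"
  proof (rule eventually_below_of_decreasing_maximum[where u = "\<lambda>j t. x t $ j / w$j"
        and L = "1 + \<epsilon> / 2" and e = "\<epsilon> / 2", OF _ \<open>0 < \<eta>\<close>])
    show "((\<lambda>t. x t $ j / w$j) has_real_derivative
        (\<beta> * \<sigma> t $ j * (A *v x t)$j - \<delta> * x t $ j) / w$j) (at t within {0..})" if "0 \<le> t" for j t
      using x[OF that] by (rule DERIV_cdivide)
    fix k t
    assume t: "0 \<le> t" and L: "1 + \<epsilon> / 2 \<le> x t $ k / w$k"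
      and max: "\<And>j. x t $ j / w$j \<le> x t $ k / w$k"
    define g where "g = x t $ k / w$k"
    have "x t \<le> g *\<^sub>R w"
      using max w by (auto simp: less_eq_vec_def g_def pos_divide_le_eq)
    then have "A *v x t \<le> g *\<^sub>R (A *v w)"
      using nonneg_matrix_vector_mult_mono[OF nonneg] by (metis matrix_vector_mult_scaleR)
    moreover have "A *v 0 \<le> A *v x t"
      using bounds[OF t] by (intro nonneg_matrix_vector_mult_mono nonneg) auto
    moreover have "\<beta> * (1 - w$k) * (A *v w)$k \<le> \<delta> * w$k"
      using super by (simp add: less_eq_vec_def sis_field_nth)
    ultimately have "\<beta> * \<sigma> t $ k * (A *v x t)$k - \<delta> * x t $ k \<le> - (\<delta> * (\<epsilon> / 2) * (w$k)\<^sup>2)"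
      using bounds[OF t] w[of k] \<open>0 < \<beta>\<close> \<open>0 < \<delta>\<close> \<open>0 < \<epsilon>\<close> L
      by (intro sis_rate_le_at_max_ratio[where g = g and W = "(A *v w)$k"])
        (auto simp: less_eq_vec_def g_def)
    then have "(\<beta> * \<sigma> t $ k * (A *v x t)$k - \<delta> * x t $ k) / w$k \<le> - (\<delta> * (\<epsilon> / 2) * w$k)"
      using w[of k] by (simp add: pos_divide_le_eq power2_eq_square)
    also have "\<dots> \<le> - \<eta>"
      using m[of k] \<open>0 < \<delta>\<close> \<open>0 < \<epsilon>\<close> by (simp add: \<eta>_def)
    finally show "(\<beta> * \<sigma> t $ k * (A *v x t)$k - \<delta> * x t $ k) / w$k \<le> - \<eta>" .
  qed (use \<open>0 < \<epsilon>\<close> in simp)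
  then show ?thesis
    by (rule eventually_mono) (use w[of i] in \<open>simp add: divide_less_eq add.commute\<close>)
qed

lemma sis_eventually_below_fixed_point:
  fixes A :: "real^'n^'n" and x \<sigma> :: "real \<Rightarrow> real^'n"
  assumes adj: "adjacency_matrix A" and conn: "graph_connected A" and "0 < \<beta>" "0 < \<delta>"
    and bounds: "\<And>t. 0 \<le> t \<Longrightarrow> 0 \<le> x t \<and> 0 \<le> \<sigma> t \<and> \<sigma> t \<le> 1 - x t"
    and x: "\<And>i t. 0 \<le> t \<Longrightarrow> ((\<lambda>t. x t $ i) has_real_derivative
              \<beta> * \<sigma> t $ i * (A *v x t)$i - \<delta> * x t $ i) (at t within {0..})"
    and "0 < e"
  shows "\<forall>\<^sub>F t in at_top. x t $ i \<le> sis_fixed_point \<beta> \<delta> A $ i + e"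
proof -
  obtain w where w: "\<And>i. 0 < w$i \<and> w$i < 1" "sis_field \<beta> \<delta> A w \<le> 0"
    and near: "\<And>i. w$i \<le> sis_fixed_point \<beta> \<delta> A $ i + e / 2"
    using sis_supersolution_near_fixed_point[OF adj conn \<open>0 < \<beta>\<close> \<open>0 < \<delta>\<close>, of "e / 2"] \<open>0 < e\<close>
    by auto
  have "\<forall>\<^sub>F t in at_top. x t $ i < (1 + e / 2) * w$i"
    using sis_eventually_below_supersolution[OF adjacency_matrix_entry_bounds(1)[OF adj]
        \<open>0 < \<beta>\<close> \<open>0 < \<delta>\<close> w bounds x, of "e / 2"] \<open>0 < e\<close>
    by simp
  moreover have "(1 + e / 2) * w$i \<le> sis_fixed_point \<beta> \<delta> A $ i + e"
  proof -
    have "e / 2 * w$i \<le> e / 2"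
      using w(1)[of i] \<open>0 < e\<close> by (intro mult_left_le) auto
    then show ?thesis
      using near[of i] by (simp add: algebra_simps)
  qed
  ultimately show ?thesis
    by (auto elim: eventually_mono)
qed

section \<open>Invariance of the bi-virus domain\<close>

definition bivirus_margin :: "(real^'n) \<times> (real^'n) \<Rightarrow> 'n + 'n + 'n \<Rightarrow> real" where
  "bivirus_margin p j = (case j of Inl i \<Rightarrow> fst p $ i | Inr (Inl i) \<Rightarrow> snd p $ i
     | Inr (Inr i) \<Rightarrow> 1 - fst p $ i - snd p $ i)"

lemma bivirus_domain_iff_margin_nonneg:
  "p \<in> bivirus_domain \<longleftrightarrow> (\<forall>j. 0 \<le> bivirus_margin p j)"
proof -
  obtain x y where p: "p = (x, y)"
    by fastforce
  have "p \<in> bivirus_domain \<longleftrightarrow> (\<forall>i. 0 \<le> x$i \<and> 0 \<le> y$i \<and> y$i \<le> 1 - x$i)"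
    by (auto simp: p bivirus_domain_def less_eq_vec_def) (smt (verit))+
  also have "\<dots> \<longleftrightarrow> (\<forall>j. 0 \<le> bivirus_margin p j)"
  proof
    assume "\<forall>i. 0 \<le> x$i \<and> 0 \<le> y$i \<and> y$i \<le> 1 - x$i"
    then have "\<And>i. 0 \<le> x$i" "\<And>i. 0 \<le> y$i" "\<And>i. y$i \<le> 1 - x$i"
      by blast+
    then show "\<forall>j. 0 \<le> bivirus_margin p j"
      by (simp add: p bivirus_margin_def split: sum.split)
  next
    assume margin: "\<forall>j. 0 \<le> bivirus_margin p j"
    show "\<forall>i. 0 \<le> x$i \<and> 0 \<le> y$i \<and> y$i \<le> 1 - x$i"
    proof
      fix i
      show "0 \<le> x$i \<and> 0 \<le> y$i \<and> y$i \<le> 1 - x$i"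
        using margin[rule_format, of "Inl i"] margin[rule_format, of "Inr (Inl i)"]
          margin[rule_format, of "Inr (Inr i)"]
        by (simp add: p bivirus_margin_def)
    qed
  qed
  finally show ?thesis .
qed

lemma has_real_derivative_fst_nth:
  "(z has_vector_derivative v) F \<Longrightarrow> ((\<lambda>t. fst (z t) $ i) has_real_derivative fst v $ i) F"
  using bounded_linear.has_vector_derivative[OF bounded_linear_compose[OF bounded_linear_vec_nth bounded_linear_fst]]
  by (simp add: has_real_derivative_iff_has_vector_derivative)

lemma has_real_derivative_snd_nth:
  "(z has_vector_derivative v) F \<Longrightarrow> ((\<lambda>t. snd (z t) $ i) has_real_derivative snd v $ i) F"
  using bounded_linear.has_vector_derivative[OF bounded_linear_compose[OF bounded_linear_vec_nth bounded_linear_snd]]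
  by (simp add: has_real_derivative_iff_has_vector_derivative)

(* Margins are affine in the state, so their rate along a trajectory is the linear part
   bivirus_margin v j - bivirus_margin 0 j applied to the velocity v. *)
lemma has_real_derivative_bivirus_margin:
  assumes "(z has_vector_derivative v) F"
  shows "((\<lambda>t. bivirus_margin (z t) j) has_real_derivative bivirus_margin v j - bivirus_margin 0 j) F"
  using has_real_derivative_fst_nth[OF assms] has_real_derivative_snd_nth[OF assms]
  by (auto simp: bivirus_margin_def split: sum.splits intro!: derivative_eq_intros)

lemma mult_ge_neg_of_bounds:
  fixes a c \<mu> R :: real
  assumes "- \<mu> \<le> a" "- \<mu> \<le> c" "\<bar>a\<bar> \<le> R" "\<bar>c\<bar> \<le> R" "0 \<le> \<mu>"
  shows "- (R * \<mu>) \<le> a * c"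
proof (cases "0 \<le> a"; cases "0 \<le> c")
  assume "0 \<le> a" "\<not> 0 \<le> c"
  then have "a * - c \<le> R * \<mu>"
    using assms by (intro mult_mono) auto
  then show ?thesis
    by simp
next
  assume "\<not> 0 \<le> a" "0 \<le> c"
  then have "- a * c \<le> \<mu> * R"
    using assms by (intro mult_mono) auto
  then show ?thesis
    by (simp add: mult.commute)
qed (use assms in \<open>auto intro: order_trans[OF _ zero_le_mult_iff[THEN iffD2]] simp: mult_nonneg_nonneg mult_nonpos_nonpos\<close>)

lemma bivirus_products_at_min_margin:
  fixes A B :: "real^'n^'n" and x y :: "real^'n"
  assumes A: "\<And>i j. 0 \<le> A$i$j \<and> A$i$j \<le> 1" and B: "\<And>i j. 0 \<le> B$i$j \<and> B$i$j \<le> 1"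
    and min: "\<And>j. m \<le> bivirus_margin (x, y) j" and "- 1 \<le> m" "m \<le> 0"
  defines "lo \<equiv> 3 * (real CARD('n))\<^sup>2 * m"
  shows "lo \<le> (1 - x$i - y$i) * (A *v x)$i" "lo \<le> (1 - x$i - y$i) * (B *v y)$i"
    "lo \<le> - m * (A *v x)$i" "lo \<le> - m * (B *v y)$i"
proof -
  define N where "N = real CARD('n)"
  have "1 \<le> N"
    by (simp add: N_def)
  have lower: "m \<le> x$j" "m \<le> y$j" "m \<le> 1 - x$j - y$j" for j
    using min[of "Inl j"] min[of "Inr (Inl j)"] min[of "Inr (Inr j)"] by (simp_all add: bivirus_margin_def)
  then have upper: "\<bar>x$j\<bar> \<le> 3" "\<bar>y$j\<bar> \<le> 3" "\<bar>1 - x$j - y$j\<bar> \<le> 3" for j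
    using \<open>- 1 \<le> m\<close> by (smt (verit))+
  define \<mu> where "\<mu> = - (N * m)"
  have "0 \<le> \<mu>" "- \<mu> \<le> m"
    using \<open>m \<le> 0\<close> mult_right_mono_neg[OF \<open>1 \<le> N\<close> \<open>m \<le> 0\<close>] by (auto simp: \<mu>_def mult_nonneg_nonpos)
  have Ax: "N * m \<le> (A *v x)$i" "\<bar>(A *v x)$i\<bar> \<le> N * 3"
    unfolding N_def using unit_matrix_vector_mult_bounds[OF A lower(1) upper(1) \<open>m \<le> 0\<close>] by auto
  have By: "N * m \<le> (B *v y)$i" "\<bar>(B *v y)$i\<bar> \<le> N * 3"
    unfolding N_def using unit_matrix_vector_mult_bounds[OF B lower(2) upper(2) \<open>m \<le> 0\<close>] by auto
  have factors: "- \<mu> \<le> 1 - x$i - y$i" "\<bar>1 - x$i - y$i\<bar> \<le> 3 * N" "- \<mu> \<le> - m" "\<bar>- m\<bar> \<le> 3 * N"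
    "- \<mu> \<le> (A *v x)$i" "\<bar>(A *v x)$i\<bar> \<le> 3 * N" "- \<mu> \<le> (B *v y)$i" "\<bar>(B *v y)$i\<bar> \<le> 3 * N"
    using lower[of i] upper[of i] Ax By \<open>- \<mu> \<le> m\<close> \<open>m \<le> 0\<close> \<open>- 1 \<le> m\<close> \<open>1 \<le> N\<close>
    by (auto simp: \<mu>_def mult.commute)
  have "lo = - (3 * N * \<mu>)"
    by (simp add: lo_def N_def \<mu>_def power2_eq_square)
  then show "lo \<le> (1 - x$i - y$i) * (A *v x)$i" "lo \<le> (1 - x$i - y$i) * (B *v y)$i"
    "lo \<le> - m * (A *v x)$i" "lo \<le> - m * (B *v y)$i"
    by (simp_all only:) (intro mult_ge_neg_of_bounds factors \<open>0 \<le> \<mu>\<close>)+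
qed

lemma bivirus_margin_rate_at_minimum:
  fixes A B :: "real^'n^'n" and p :: "(real^'n) \<times> (real^'n)"
  assumes A: "\<And>i j. 0 \<le> A$i$j \<and> A$i$j \<le> 1" and B: "\<And>i j. 0 \<le> B$i$j \<and> B$i$j \<le> 1"
    and "0 \<le> \<beta>1" "0 \<le> \<delta>1" "0 \<le> \<beta>2" "0 \<le> \<delta>2"
    and min: "\<And>j. bivirus_margin p k \<le> bivirus_margin p j"
    and "- 1 \<le> bivirus_margin p k" "bivirus_margin p k \<le> 0"
  shows "(3 * (real CARD('n))\<^sup>2 * (\<beta>1 + \<beta>2) + \<delta>1 + \<delta>2) * bivirus_margin p k
    \<le> bivirus_margin (bivirus_field \<beta>1 \<delta>1 \<beta>2 \<delta>2 A B p) k - bivirus_margin 0 k"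
proof -
  obtain x y where p: "p = (x, y)"
    by fastforce
  define m where "m = bivirus_margin p k"
  define lo where "lo = 3 * (real CARD('n))\<^sup>2 * m"
  define s where "s = 1 - x - y"
  define n where "n = - m"
  have s_nth: "s$i = 1 - x$i - y$i" for i
    by (simp add: s_def)
  have lower: "m \<le> x$i" "m \<le> y$i" for i
    using min[of "Inl i"] min[of "Inr (Inl i)"] by (simp_all add: m_def p bivirus_margin_def)
  have products: "lo \<le> s$i * (A *v x)$i" "lo \<le> s$i * (B *v y)$i"
    "lo \<le> n * (A *v x)$i" "lo \<le> n * (B *v y)$i" for i
    using bivirus_products_at_min_margin[OF A B, of m x y] min assms(8,9)
    by (simp_all add: lo_def m_def p s_nth n_def)
  note scaled = mult_left_mono[OF products(1) \<open>0 \<le> \<beta>1\<close>] mult_left_mono[OF products(2) \<open>0 \<le> \<beta>2\<close>]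
    mult_left_mono[OF products(3) \<open>0 \<le> \<beta>1\<close>] mult_left_mono[OF products(4) \<open>0 \<le> \<beta>2\<close>]
  have "m \<le> 0"
    using assms(9) by (simp add: m_def)
  then have "lo \<le> 0"
    unfolding lo_def by (intro mult_nonneg_nonpos) auto
  then have signs: "\<beta>1 * lo \<le> 0" "\<beta>2 * lo \<le> 0" "\<delta>1 * m \<le> 0" "\<delta>2 * m \<le> 0"
    using assms(3-6) \<open>m \<le> 0\<close> by (simp_all add: mult_nonneg_nonpos)
  have K: "(3 * (real CARD('n))\<^sup>2 * (\<beta>1 + \<beta>2) + \<delta>1 + \<delta>2) * m = \<beta>1 * lo + \<beta>2 * lo + \<delta>1 * m + \<delta>2 * m"
    by (simp add: lo_def algebra_simps)
  have field: "fst (bivirus_field \<beta>1 \<delta>1 \<beta>2 \<delta>2 A B p) $ i = \<beta>1 * (s$i * (A *v x)$i) - \<delta>1 * x$i"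
    "snd (bivirus_field \<beta>1 \<delta>1 \<beta>2 \<delta>2 A B p) $ i = \<beta>2 * (s$i * (B *v y)$i) - \<delta>2 * y$i" for i
    by (simp_all add: bivirus_field_def p s_nth mult.assoc)
  let ?rate = "bivirus_margin (bivirus_field \<beta>1 \<delta>1 \<beta>2 \<delta>2 A B p) k - bivirus_margin 0 k"
  have "(3 * (real CARD('n))\<^sup>2 * (\<beta>1 + \<beta>2) + \<delta>1 + \<delta>2) * m \<le> ?rate"
  proof -
    consider (x) i where "k = Inl i" | (y) i where "k = Inr (Inl i)" | (s) i where "k = Inr (Inr i)"
      by (metis sum.exhaust)
    then show ?thesis
    proof cases
      case x
      then have "?rate = \<beta>1 * (s$i * (A *v x)$i) - \<delta>1 * m"
        using field(1)[of i] by (simp add: m_def p bivirus_margin_def)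
      then show ?thesis
        using K signs scaled(1)[of i] by linarith
    next
      case y
      then have "?rate = \<beta>2 * (s$i * (B *v y)$i) - \<delta>2 * m"
        using field(2)[of i] by (simp add: m_def p bivirus_margin_def)
      then show ?thesis
        using K signs scaled(2)[of i] by linarith
    next
      case s
      then have "s$i = - n"
        by (simp add: n_def m_def p bivirus_margin_def s_nth)
      then have "?rate = \<beta>1 * (n * (A *v x)$i) + \<delta>1 * x$i + \<beta>2 * (n * (B *v y)$i) + \<delta>2 * y$i"
        using s field[of i] by (simp add: bivirus_margin_def algebra_simps)
      moreover have "\<delta>1 * m \<le> \<delta>1 * x$i" "\<delta>2 * m \<le> \<delta>2 * y$i"
        using lower[of i] assms(4,6) by (simp_all add: mult_left_mono)
      ultimately show ?thesis
        using K scaled(3,4)[of i] by linarith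
    qed
  qed
  then show ?thesis
    by (simp add: m_def)
qed

lemma bivirus_domain_invariant:
  fixes A B :: "real^'n^'n" and z :: "real \<Rightarrow> (real^'n) \<times> (real^'n)"
  assumes A: "\<And>i j. 0 \<le> A$i$j \<and> A$i$j \<le> 1" and B: "\<And>i j. 0 \<le> B$i$j \<and> B$i$j \<le> 1"
    and rates: "0 \<le> \<beta>1" "0 \<le> \<delta>1" "0 \<le> \<beta>2" "0 \<le> \<delta>2"
    and z0: "z 0 \<in> bivirus_domain"
    and z: "\<And>t. 0 \<le> t \<Longrightarrow> (z has_vector_derivative bivirus_field \<beta>1 \<delta>1 \<beta>2 \<delta>2 A B (z t)) (at t within {0..})"
    and "0 \<le> t"
  shows "z t \<in> bivirus_domain"
proof -
  have "0 \<le> bivirus_margin (z t) j" for j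
  proof (rule nonneg_of_inward_minimum[where q = "\<lambda>j t. bivirus_margin (z t) j" and \<epsilon> = 1])
    show "((\<lambda>t. bivirus_margin (z t) j) has_real_derivative
        bivirus_margin (bivirus_field \<beta>1 \<delta>1 \<beta>2 \<delta>2 A B (z t)) j - bivirus_margin 0 j) (at t within {0..})"
      if "0 \<le> t" for j t
      by (rule has_real_derivative_bivirus_margin[OF z[OF that]])
    show "0 \<le> bivirus_margin (z 0) j" for j
      using z0 by (simp add: bivirus_domain_iff_margin_nonneg)
    show "(3 * (real CARD('n))\<^sup>2 * (\<beta>1 + \<beta>2) + \<delta>1 + \<delta>2) * bivirus_margin (z t) k
        \<le> bivirus_margin (bivirus_field \<beta>1 \<delta>1 \<beta>2 \<delta>2 A B (z t)) k - bivirus_margin 0 k"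
      if "0 \<le> t" "- 1 \<le> bivirus_margin (z t) k" "bivirus_margin (z t) k \<le> 0"
        "\<And>j. bivirus_margin (z t) k \<le> bivirus_margin (z t) j" for k t
      using that by (intro bivirus_margin_rate_at_minimum[OF A B rates]) auto
  qed (use \<open>0 \<le> t\<close> in auto)
  then show ?thesis
    by (simp add: bivirus_domain_iff_margin_nonneg)
qed

section \<open>Convergence to the box\<close>

lemma norm_diff_componentwise_min_le:
  fixes x a :: "real^'n"
  assumes "\<And>i. x$i \<le> a$i + e" and "0 \<le> e"
  shows "norm (x - (\<chi> i. min (x$i) (a$i))) \<le> real CARD('n) * e"
proof -
  have "norm (x - (\<chi> i. min (x$i) (a$i))) \<le> (\<Sum>i\<in>UNIV. \<bar>(x - (\<chi> i. min (x$i) (a$i)))$i\<bar>)"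
    by (rule norm_le_l1_cart)
  also have "\<dots> \<le> (\<Sum>i\<in>(UNIV::'n set). e)"
  proof (intro sum_mono)
    fix i
    show "\<bar>(x - (\<chi> i. min (x$i) (a$i)))$i\<bar> \<le> e"
      using assms(1)[of i] \<open>0 \<le> e\<close> by (simp add: min_def)
  qed
  finally show ?thesis
    by simp
qed

lemma infdist_bivirus_box_le:
  fixes p :: "(real^'n) \<times> (real^'n)"
  assumes p: "p \<in> bivirus_domain" and "0 \<le> a" "0 \<le> b" "0 \<le> e"
    and above: "\<And>i. fst p $ i \<le> a$i + e" "\<And>i. snd p $ i \<le> b$i + e"
  shows "infdist p {q \<in> bivirus_domain. le_K (0, b) q \<and> le_K q (a, 0)} \<le> 2 * real CARD('n) * e"
proof -
  obtain x y where xy: "p = (x, y)"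
    by fastforce
  define q where "q = ((\<chi> i. min (x$i) (a$i)), (\<chi> i. min (y$i) (b$i)))"
  have coords: "0 \<le> x$i" "0 \<le> y$i" "x$i \<le> 1" "y$i \<le> 1" "x$i + y$i \<le> 1" "0 \<le> a$i" "0 \<le> b$i" for i
    using p \<open>0 \<le> a\<close> \<open>0 \<le> b\<close> by (auto simp: xy bivirus_domain_def less_eq_vec_def)
  have "min (x$i) (a$i) + min (y$i) (b$i) \<le> 1" for i
    using add_mono[OF min.cobounded1 min.cobounded1, of "x$i" "a$i" "y$i" "b$i"] coords(5)[of i] by linarith
  then have "q \<in> {q \<in> bivirus_domain. le_K (0, b) q \<and> le_K q (a, 0)}"
    using coords by (simp add: q_def bivirus_domain_def le_K_def less_eq_vec_def min_le_iff_disj)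
  then have "infdist p {q \<in> bivirus_domain. le_K (0, b) q \<and> le_K q (a, 0)} \<le> dist p q"
    by (rule infdist_le)
  also have "\<dots> \<le> norm (x - fst q) + norm (y - snd q)"
    using norm_Pair_le[of "x - fst q" "y - snd q"] by (simp add: xy dist_norm q_def)
  also have "\<dots> \<le> real CARD('n) * e + real CARD('n) * e"
    using norm_diff_componentwise_min_le[OF above(1) \<open>0 \<le> e\<close>]
      norm_diff_componentwise_min_le[OF above(2) \<open>0 \<le> e\<close>]
    unfolding q_def xy fst_conv snd_conv by (rule add_mono)
  finally show ?thesis
    by (simp add: mult_ac)
qed

lemma tendsto_infdist_bivirus_box:
  fixes z :: "real \<Rightarrow> (real^'n) \<times> (real^'n)"
  assumes "0 \<le> a" "0 \<le> b"
    and below: "\<And>e. 0 < e \<Longrightarrow> \<forall>\<^sub>F t in F. z t \<in> bivirus_domain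
      \<and> (\<forall>i. fst (z t) $ i \<le> a$i + e) \<and> (\<forall>i. snd (z t) $ i \<le> b$i + e)"
  shows "((\<lambda>t. infdist (z t) {p \<in> bivirus_domain. le_K (0, b) p \<and> le_K p (a, 0)}) \<longlongrightarrow> 0) F"
proof (rule tendstoI)
  fix \<epsilon> :: real
  assume "0 < \<epsilon>"
  define e where "e = \<epsilon> / (4 * real CARD('n))"
  have "0 < e" "2 * real CARD('n) * e < \<epsilon>"
    using \<open>0 < \<epsilon>\<close> by (simp_all add: e_def)
  show "\<forall>\<^sub>F t in F. dist (infdist (z t) {p \<in> bivirus_domain. le_K (0, b) p \<and> le_K p (a, 0)}) 0 < \<epsilon>"
    using below[OF \<open>0 < e\<close>]
  proof (rule eventually_mono)
    fix t
    assume "z t \<in> bivirus_domain \<and> (\<forall>i. fst (z t) $ i \<le> a$i + e) \<and> (\<forall>i. snd (z t) $ i \<le> b$i + e)"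
    then have "infdist (z t) {p \<in> bivirus_domain. le_K (0, b) p \<and> le_K p (a, 0)} \<le> 2 * real CARD('n) * e"
      using assms(1,2) \<open>0 < e\<close> by (intro infdist_bivirus_box_le) auto
    then show "dist (infdist (z t) {p \<in> bivirus_domain. le_K (0, b) p \<and> le_K p (a, 0)}) 0 < \<epsilon>"
      using \<open>2 * real CARD('n) * e < \<epsilon>\<close> by (simp add: infdist_nonneg)
  qed
qed

lemma bivirus_domain_susceptible_bounds:
  assumes "p \<in> bivirus_domain"
  shows "0 \<le> fst p \<and> 0 \<le> 1 - fst p - snd p \<and> 1 - fst p - snd p \<le> 1 - fst p"
    and "0 \<le> snd p \<and> 0 \<le> 1 - fst p - snd p \<and> 1 - fst p - snd p \<le> 1 - snd p"
  using assms unfolding bivirus_domain_iff_margin_nonneg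
  by (auto simp: less_eq_vec_def bivirus_margin_def
      dest: spec[of _ "Inl _"] spec[of _ "Inr (Inl _)"] spec[of _ "Inr (Inr _)"])

lemma bivirus_component_derivatives:
  assumes "(z has_vector_derivative bivirus_field \<beta>1 \<delta>1 \<beta>2 \<delta>2 A B (z t)) F"
  shows "((\<lambda>t. fst (z t) $ i) has_real_derivative
      \<beta>1 * (1 - fst (z t) - snd (z t)) $ i * (A *v fst (z t))$i - \<delta>1 * fst (z t) $ i) F"
    and "((\<lambda>t. snd (z t) $ i) has_real_derivative
      \<beta>2 * (1 - fst (z t) - snd (z t)) $ i * (B *v snd (z t))$i - \<delta>2 * snd (z t) $ i) F"
  using has_real_derivative_fst_nth[OF assms] has_real_derivative_snd_nth[OF assms]
  by (simp_all add: bivirus_field_def Let_def)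

theorem proposition4:
  fixes A B :: "real^'n^'n" and \<beta>1 \<delta>1 \<beta>2 \<delta>2 :: real
    and z :: "real \<Rightarrow> (real^'n) \<times> (real^'n)"
  assumes "adjacency_matrix A" and "graph_connected A"
    and "adjacency_matrix B" and "graph_connected B"
    and "\<beta>1 > 0" and "\<delta>1 > 0" and "\<beta>2 > 0" and "\<delta>2 > 0"
    and "z 0 \<in> bivirus_domain - {(0, 0)}"
    and "\<And>t. t \<ge> 0 \<Longrightarrow>
           (z has_vector_derivative bivirus_field \<beta>1 \<delta>1 \<beta>2 \<delta>2 A B (z t)) (at t within {0..})"
  shows "((\<lambda>t. infdist (z t)
            {p \<in> bivirus_domain.
               le_K (0, sis_fixed_point \<beta>2 \<delta>2 B) p \<and> le_K p (sis_fixed_point \<beta>1 \<delta>1 A, 0)})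
          \<longlongrightarrow> 0) at_top"
proof -
  have in_domain: "z t \<in> bivirus_domain" if "0 \<le> t" for t
    using bivirus_domain_invariant[OF _ _ _ _ _ _ _ assms(10) that] assms(1,3,5-9)
    by (auto simp: adjacency_matrix_entry_bounds less_imp_le)
  note trajectory = bivirus_domain_susceptible_bounds[OF in_domain]
    bivirus_component_derivatives[OF assms(10)]
  have "\<forall>\<^sub>F t in at_top. fst (z t) $ i \<le> sis_fixed_point \<beta>1 \<delta>1 A $ i + e"
    and "\<forall>\<^sub>F t in at_top. snd (z t) $ i \<le> sis_fixed_point \<beta>2 \<delta>2 B $ i + e" if "0 < e" for e i
    using sis_eventually_below_fixed_point[OF assms(1,2,5,6) trajectory(1,3) that]
      sis_eventually_below_fixed_point[OF assms(3,4,7,8) trajectory(2,4) that] by auto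
  moreover have "\<forall>\<^sub>F t in at_top. z t \<in> bivirus_domain"
    using eventually_ge_at_top[of 0] by (rule eventually_mono) (rule in_domain)
  ultimately show ?thesis
    using sis_fixed_point_nonneg assms(1-8)
    by (intro tendsto_infdist_bivirus_box) (auto intro!: eventually_conj eventually_all_finite)
qed

end
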